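(* There exist an instance space $\mathcal{X}$ and a class $\mathcal{H}\subseteq\{\pm1\}^{\mathcal{X}}$ such that for every local learner $\mathbb{A}$ and every sample size $m\in\mathbb{N}$ there exists a perturbation set $\mathcal{U}:\mathcal{X}\to 2^{\mathcal{X}}$ for which: (1) there is a distribution $P\in\mathrm{RE}(\mathcal{H},\mathcal{U})$ with $\mathbb{E}_{S\sim P^m}\, R_{\mathcal{U}}(\mathbb{A}(S_{\mathcal{U}});P)\ge \frac16$, i.e. $\mathbb{A}$ fails to robustly learn $\mathcal{H}$ with respect to $\mathcal{U}$ using $m$ samples; and (2) $\mathcal{H}$ is robustly learnable with respect to $\mathcal{U}$ with $0$ samples by a (non-local) learner which may use full knowledge of $\mathcal{U}$: there is a single predictor $f:\mathcal{X}\to\{\pm1\}$ with $R_{\mathcal{U}}(f;\mathcal{D})=0$ for every $\mathcal{D}\in\mathrm{RE}(\mathcal{H},\mathcal{U})$.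
   Context: Let $\mathcal{Y}=\{\pm1\}$. For a perturbation set $\mathcal{U}:\mathcal{X}\to2^{\mathcal{X}}$, a distribution $\mathcal{D}$ on $\mathcal{X}\times\mathcal{Y}$ and $h:\mathcal{X}\to\mathcal{Y}$, the robust risk is $R_{\mathcal{U}}(h;\mathcal{D})=\mathbb{E}_{(x,y)\sim\mathcal{D}}\big[\sup_{z\in\mathcal{U}(x)}\mathbb{1}\{h(z)\neq y\}\big]$. $\mathrm{RE}(\mathcal{H},\mathcal{U})$ denotes the set of distributions $\mathcal{D}$ on $\mathcal{X}\times\mathcal{Y}$ that are robustly realizable, i.e. there is $h^*\in\mathcal{H}$ with $R_{\mathcal{U}}(h^*;\mathcal{D})=0$. A local learner for $\mathcal{H}$ is a map $\mathbb{A}:(\mathcal{X}\times\mathcal{Y}\times2^{\mathcal{X}})^*\to\mathcal{Y}^{\mathcal{X}}$ (it may depend on $\mathcal{H}$ but not on $\mathcal{U}$); given a perturbation set $\mathcal{U}$ and a sample $S=((x_i,y_i))_{i=1}^m$, it is run on $S_{\mathcal{U}}=((x_i,y_i,\mathcal{U}(x_i)))_{i=1}^m$, so it only sees the perturbation sets of the training points. *)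

theory Defs
  imports "HOL-Probability.Probability"
begin

text \<open>Labels \<open>{+1,-1}\<close> are encoded as bool (True = +1, False = -1).
  The instance space is the countable type nat; distributions on X x Y are pmfs
  (on a countable space with the discrete sigma-algebra, these are all distributions).\<close>

type_synonym inst = nat
type_synonym label = bool

text \<open>Robust risk: E_{(x,y)~D} [ sup_{z in U x} 1{h z ~= y} ]; the sup of the 0/1 indicators
  is written out as the indicator of (EX z in U x. h z ~= y) (sup over empty set = 0).\<close>
definition robust_risk ::
  "(inst \<Rightarrow> inst set) \<Rightarrow> (inst \<Rightarrow> label) \<Rightarrow> (inst \<times> label) pmf \<Rightarrow> real" where
  "robust_risk U h D =
     measure_pmf.expectation D (\<lambda>(x, y). (if \<exists>z\<in>U x. h z \<noteq> y then 1 else 0 :: real))"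

definition RE :: "(inst \<Rightarrow> label) set \<Rightarrow> (inst \<Rightarrow> inst set) \<Rightarrow> (inst \<times> label) pmf set" where
  "RE H U = {D. \<exists>h\<in>H. robust_risk U h D = 0}"

type_synonym local_learner = "(inst \<times> label \<times> inst set) list \<Rightarrow> (inst \<Rightarrow> label)"

definition annotate :: "(inst \<Rightarrow> inst set) \<Rightarrow> (inst \<times> label) list \<Rightarrow> (inst \<times> label \<times> inst set) list" where
  "annotate U S = map (\<lambda>(x, y). (x, y, U x)) S"

end

theory Submission
  imports Defs
begin

text \<open>Points 0 and 1 are anchors on which every hypothesis of the class is +1 and -1
  respectively. A hidden label vector ys is written into the perturbation sets: point i + 2
  may be perturbed to the anchor carrying its label ys ! i. Any learner that knows U reads
  the labels off, so RE(H,U) is learnable without samples. A local learner sees U only on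
  its m training points; on the at least m + 1 of 2m + 1 points it has not seen, flipping
  the hidden label leaves its output unchanged, so averaged over all ys it errs on each
  unseen point with probability 1/2. Hence for some ys its expected robust risk is at least
  (m + 1) / (2 (2m + 1)) \<ge> 1/6.\<close>

lemma robust_risk_eq_0_iff:
  "robust_risk U h D = 0 \<longleftrightarrow> (\<forall>(x, y)\<in>set_pmf D. \<forall>z\<in>U x. h z = y)"
proof -
  have "integrable D (\<lambda>(x, y). if \<exists>z\<in>U x. h z \<noteq> y then 1 else 0 :: real)"
    by (rule measure_pmf.integrable_const_bound[where B = 1]) auto
  then show ?thesis
    unfolding robust_risk_def
    by (subst measure_pmf.integral_nonneg_eq_0_iff_AE_banach)
       (auto simp: AE_measure_pmf_iff split: if_splits)
qed

lemma replicate_pmf_map_pmf: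
  "replicate_pmf m (map_pmf g p) = map_pmf (map g) (replicate_pmf m p)"
  by (induction m) (simp_all add: map_pmf_def bind_assoc_pmf bind_return_pmf)

lemma ex_ge_average:
  fixes f :: "'a \<Rightarrow> real" and c :: real
  assumes "finite Y" "Y \<noteq> {}" "c * card Y \<le> (\<Sum>y\<in>Y. f y)"
  shows "\<exists>y\<in>Y. c \<le> f y"
proof (rule ccontr)
  assume "\<not> ?thesis"
  then have "(\<Sum>y\<in>Y. f y) < (\<Sum>y\<in>Y. c)"
    by (intro sum_strict_mono assms(1,2)) auto
  with assms(3) show False by (simp add: mult.commute)
qed

lemma finite_bool_lists_length: "finite {ys :: bool list. length ys = n}"
  using finite_lists_length_eq[of "UNIV :: bool set" n] by simp

lemma sum_mismatch_bit_ignored: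
  fixes G :: "bool list \<Rightarrow> bool"
  assumes i: "i < n" and ignores: "\<And>ys b. G (ys[i := b]) = G ys"
  shows "(\<Sum>ys | length ys = n. if G ys \<noteq> ys ! i then 1 else 0 :: real)
           = card {ys :: bool list. length ys = n} / 2"
proof -
  let ?Y = "{ys :: bool list. length ys = n}"
  let ?e = "\<lambda>ys. if G ys \<noteq> ys ! i then 1 else 0 :: real"
  let ?flip = "\<lambda>ys :: bool list. ys[i := \<not> ys ! i]"
  have flip_flip: "?flip (?flip ys) = ys" for ys
    by (cases "i < length ys") (auto simp: list_update_beyond)
  have "sum ?e ?Y = (\<Sum>ys\<in>?Y. ?e (?flip ys))"
    by (rule sum.reindex_bij_witness[where i = ?flip and j = ?flip])
       (simp_all only: flip_flip, auto)
  also have "\<dots> = (\<Sum>ys\<in>?Y. 1 - ?e ys)"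
    using i by (intro sum.cong refl) (simp add: ignores)
  also have "\<dots> = card ?Y - sum ?e ?Y"
    by (simp add: sum_subtractf)
  finally show ?thesis by simp
qed

definition coding_perturbation :: "bool list \<Rightarrow> inst \<Rightarrow> inst set" where
  "coding_perturbation ys z =
     (if 2 \<le> z \<and> z - 2 < length ys then {z, if ys ! (z - 2) then 0 else 1} else {})"

definition coding_example :: "bool list \<Rightarrow> nat \<Rightarrow> inst \<times> label" where
  "coding_example ys i = (i + 2, ys ! i)"

definition coding_pmf :: "bool list \<Rightarrow> (inst \<times> label) pmf" where
  "coding_pmf ys = map_pmf (coding_example ys) (pmf_of_set {..<length ys})"

definition anchored :: "(inst \<Rightarrow> label) set" where
  "anchored = {h. h 0 \<and> \<not> h 1}"

definition anchor_decoder :: "(inst \<Rightarrow> inst set) \<Rightarrow> inst \<Rightarrow> label" where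
  "anchor_decoder U z \<longleftrightarrow> z = 0 \<or> 0 \<in> U z"

definition learner_on_indices :: "local_learner \<Rightarrow> bool list \<Rightarrow> nat list \<Rightarrow> inst \<Rightarrow> label" where
  "learner_on_indices A ys I = A (annotate (coding_perturbation ys) (map (coding_example ys) I))"

lemma coding_pmf_in_RE:
  assumes "ys \<noteq> []"
  shows "coding_pmf ys \<in> RE anchored (coding_perturbation ys)"
proof -
  let ?f = "anchor_decoder (coding_perturbation ys)"
  have "?f \<in> anchored"
    by (simp add: anchored_def anchor_decoder_def coding_perturbation_def)
  moreover have "robust_risk (coding_perturbation ys) ?f (coding_pmf ys) = 0"
    using assms
    by (auto simp: robust_risk_eq_0_iff coding_pmf_def coding_example_def
          anchor_decoder_def coding_perturbation_def)
  ultimately show ?thesis by (auto simp: RE_def)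
qed

lemma anchor_decoder_robust:
  assumes "D \<in> RE anchored (coding_perturbation ys)"
  shows "robust_risk (coding_perturbation ys) (anchor_decoder (coding_perturbation ys)) D = 0"
  unfolding robust_risk_eq_0_iff
proof (intro ballI, clarify)
  let ?U = "coding_perturbation ys"
  obtain h where h: "h 0" "\<not> h 1" and realizes: "robust_risk ?U h D = 0"
    using assms by (auto simp: RE_def anchored_def)
  fix x y z
  assume xy: "(x, y) \<in> set_pmf D" and z: "z \<in> ?U x"
  then have "2 \<le> x" "x - 2 < length ys"
    by (auto simp: coding_perturbation_def split: if_splits)
  then have U: "?U x = {x, if ys ! (x - 2) then 0 else 1}"
    by (simp add: coding_perturbation_def)
  have "\<forall>z\<in>?U x. h z = y"
    using realizes xy by (auto simp: robust_risk_eq_0_iff)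
  then have "y = ys ! (x - 2)"
    using h U by (cases "ys ! (x - 2)") auto
  then show "anchor_decoder ?U z = y"
    using z U \<open>2 \<le> x\<close> by (auto simp: anchor_decoder_def coding_perturbation_def)
qed

lemma learner_on_indices_update:
  assumes "i \<notin> set I"
  shows "learner_on_indices A (ys[i := b]) I = learner_on_indices A ys I"
proof -
  have "ys[i := b] ! j = ys ! j" if "j \<in> set I" for j
    using assms that by (metis nth_list_update_neq)
  then have "annotate (coding_perturbation (ys[i := b])) (map (coding_example (ys[i := b])) I)
      = annotate (coding_perturbation ys) (map (coding_example ys) I)"
    by (auto simp: annotate_def coding_example_def coding_perturbation_def)
  then show ?thesis by (simp add: learner_on_indices_def)
qed

lemma robust_risk_coding_pmf_ge:
  assumes "ys \<noteq> []" "K \<subseteq> {..<length ys}"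
  shows "(\<Sum>i\<in>K. if g (i + 2) \<noteq> ys ! i then 1 else 0) / length ys
           \<le> robust_risk (coding_perturbation ys) g (coding_pmf ys)"
proof -
  let ?U = "coding_perturbation ys"
  have "(\<Sum>i\<in>K. if g (i + 2) \<noteq> ys ! i then 1 else 0)
          \<le> (\<Sum>i<length ys. if g (i + 2) \<noteq> ys ! i then 1 else 0 :: real)"
    using assms(2) by (intro sum_mono2) auto
  also have "\<dots> \<le> (\<Sum>i<length ys. if \<exists>z\<in>?U (i + 2). g z \<noteq> ys ! i then 1 else 0)"
    by (intro sum_mono) (auto simp: coding_perturbation_def)
  also have "\<dots> / length ys = robust_risk ?U g (coding_pmf ys)"
    using assms(1) unfolding robust_risk_def coding_pmf_def integral_map_pmf
    by (subst integral_pmf_of_set) (auto simp: coding_example_def)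
  finally show ?thesis
    by (simp add: divide_right_mono)
qed

lemma sum_robust_risk_ge:
  assumes "n > 0" "set I \<subseteq> {..<n}"
  shows "real (n - length I) * card {ys :: bool list. length ys = n} / (2 * n)
           \<le> (\<Sum>ys | length ys = n.
                robust_risk (coding_perturbation ys) (learner_on_indices A ys I) (coding_pmf ys))"
proof -
  let ?Y = "{ys :: bool list. length ys = n}"
  let ?K = "{..<n} - set I"
  let ?e = "\<lambda>ys i. if learner_on_indices A ys I (i + 2) \<noteq> ys ! i then 1 else 0 :: real"
  have "n - length I \<le> card ?K"
    using assms(2) card_length[of I] by (simp add: card_Diff_subset)
  then have "real (n - length I) * card ?Y / (2 * n) \<le> card ?K * (card ?Y / 2) / n"
    by (simp add: divide_right_mono mult_right_mono)
  also have "\<dots> = (\<Sum>i\<in>?K. card ?Y / 2) / n"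
    by simp
  also have "\<dots> = (\<Sum>i\<in>?K. \<Sum>ys\<in>?Y. ?e ys i) / n"
  proof -
    have "(\<Sum>ys\<in>?Y. ?e ys i) = card ?Y / 2" if "i \<in> ?K" for i
      using that
      by (intro sum_mismatch_bit_ignored[where G = "\<lambda>ys. learner_on_indices A ys I (i + 2)"])
         (auto simp: learner_on_indices_update)
    then have "(\<Sum>i\<in>?K. \<Sum>ys\<in>?Y. ?e ys i) = (\<Sum>i\<in>?K. card ?Y / 2)"
      by (rule sum.cong[OF refl])
    then show ?thesis by (simp only:)
  qed
  also have "\<dots> = (\<Sum>ys\<in>?Y. (\<Sum>i\<in>?K. ?e ys i) / n)"
    by (simp add: sum_divide_distrib sum.swap[of _ ?K])
  also have "\<dots> \<le> (\<Sum>ys\<in>?Y. robust_risk (coding_perturbation ys) (learner_on_indices A ys I) (coding_pmf ys))"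
  proof (rule sum_mono)
    fix ys :: "bool list"
    assume "ys \<in> ?Y"
    then have "length ys = n" "ys \<noteq> []"
      using assms(1) by auto
    then show "(\<Sum>i\<in>?K. ?e ys i) / n
        \<le> robust_risk (coding_perturbation ys) (learner_on_indices A ys I) (coding_pmf ys)"
      using robust_risk_coding_pmf_ge[of ys ?K "learner_on_indices A ys I"] by auto
  qed
  finally show ?thesis by simp
qed

lemma expected_robust_risk_coding_pmf:
  "measure_pmf.expectation (replicate_pmf m (coding_pmf ys))
     (\<lambda>S. robust_risk (coding_perturbation ys) (A (annotate (coding_perturbation ys) S)) (coding_pmf ys))
   = measure_pmf.expectation (replicate_pmf m (pmf_of_set {..<length ys}))
       (\<lambda>I. robust_risk (coding_perturbation ys) (learner_on_indices A ys I) (coding_pmf ys))"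
  by (simp add: coding_pmf_def replicate_pmf_map_pmf learner_on_indices_def)

lemma local_learner_lower_bound:
  assumes "n > 0"
  shows "\<exists>ys. length ys = n \<and> real (n - m) / (2 * n)
           \<le> measure_pmf.expectation (replicate_pmf m (coding_pmf ys))
               (\<lambda>S. robust_risk (coding_perturbation ys) (A (annotate (coding_perturbation ys) S))
                      (coding_pmf ys))"
proof -
  let ?Y = "{ys :: bool list. length ys = n}"
  let ?Q = "replicate_pmf m (pmf_of_set {..<n})"
  let ?R = "\<lambda>ys I. robust_risk (coding_perturbation ys) (learner_on_indices A ys I) (coding_pmf ys)"
  have support: "set_pmf ?Q = {I. set I \<subseteq> {..<n} \<and> length I = m}"
    using assms by (auto simp: set_replicate_pmf set_pmf_of_set lessThan_empty_iff)
  then have finite_support: "finite (set_pmf ?Q)"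
    by (simp add: finite_lists_length_eq)
  have "real (n - m) / (2 * n) * card ?Y \<le> measure_pmf.expectation ?Q (\<lambda>I. \<Sum>ys\<in>?Y. ?R ys I)"
    using sum_robust_risk_ge[OF assms]
    by (intro measure_pmf.integral_ge_const integrable_measure_pmf_finite[OF finite_support])
       (auto simp: AE_measure_pmf_iff support)
  also have "\<dots> = (\<Sum>ys\<in>?Y. measure_pmf.expectation ?Q (?R ys))"
    by (intro Bochner_Integration.integral_sum integrable_measure_pmf_finite[OF finite_support])
  finally have "\<exists>ys\<in>?Y. real (n - m) / (2 * n) \<le> measure_pmf.expectation ?Q (?R ys)"
    by (intro ex_ge_average finite_bool_lists_length) (auto intro: exI[of _ "replicate n True"])
  then obtain ys where "ys \<in> ?Y" "real (n - m) / (2 * n) \<le> measure_pmf.expectation ?Q (?R ys)" ..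
  then show ?thesis
    by (auto simp: expected_robust_risk_coding_pmf)
qed

theorem mainTheorem1:
  shows "\<exists>H :: (inst \<Rightarrow> label) set.
     \<forall>(A :: local_learner) (m :: nat). \<exists>U :: inst \<Rightarrow> inst set.
       (\<exists>P \<in> RE H U.
          measure_pmf.expectation (replicate_pmf m P)
            (\<lambda>S. robust_risk U (A (annotate U S)) P) \<ge> 1 / 6)
     \<and> (\<exists>f :: inst \<Rightarrow> label. \<forall>D \<in> RE H U. robust_risk U f D = 0)"
proof (intro exI[of _ anchored] allI)
  fix A :: local_learner and m :: nat
  obtain ys where length_ys: "length ys = 2 * m + 1"
    and fails: "real (2 * m + 1 - m) / (2 * (2 * m + 1))
      \<le> measure_pmf.expectation (replicate_pmf m (coding_pmf ys))
          (\<lambda>S. robust_risk (coding_perturbation ys) (A (annotate (coding_perturbation ys) S)) (coding_pmf ys))"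
    using local_learner_lower_bound[of "2 * m + 1" m A] by auto
  have bound: "1 / 6 \<le> real (2 * m + 1 - m) / (2 * (2 * m + 1))"
    by (simp add: field_simps)
  show "\<exists>U. (\<exists>P \<in> RE anchored U. measure_pmf.expectation (replicate_pmf m P)
              (\<lambda>S. robust_risk U (A (annotate U S)) P) \<ge> 1 / 6)
          \<and> (\<exists>f. \<forall>D \<in> RE anchored U. robust_risk U f D = 0)"
  proof (intro exI[of _ "coding_perturbation ys"] conjI bexI[of _ "coding_pmf ys"])
    show "coding_pmf ys \<in> RE anchored (coding_perturbation ys)"
      using length_ys by (intro coding_pmf_in_RE) auto
    show "\<exists>f. \<forall>D \<in> RE anchored (coding_perturbation ys). robust_risk (coding_perturbation ys) f D = 0"
      using anchor_decoder_robust by blast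
  qed (use fails bound in linarith)
qed

end
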